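(* Let $0\le q<N$, $n\ge1$, and let $c\in H^q(\mathcal{E}_0^\bullet\otimes_{\mathcal{O}}\mathcal{O}/\mathfrak{m}_0^n)$ satisfy $o_n^q(c)\ne0$. Then there exist an integer $n'$ with $1\le n'\le n$ and a class $c'\in H^q(\mathcal{E}_0^\bullet\otimes_{\mathcal{O}}\mathcal{O}/\mathfrak{m}_0^{n'})$ such that $$o^q_{n',n'-1}(c')=\rho^{q+1}_{n'-1}\big(o_n^q(c)\big)\neq 0\quad\text{in } H^{q+1}(\mathcal{E}_0^\bullet\otimes_{\mathcal{O}}\mathcal{O}/\mathfrak{m}_0^{n'}).$$
   Context: Setting. Let $B$ be a one-dimensional complex manifold (a disc) with holomorphic coordinate $t$ centred at a point $0\in B$; write $\mathcal{O}=\mathcal{O}_{B,0}$ and $\mathfrak{m}_0=t\mathcal{O}$ for its maximal ideal. Let $(E^\bullet,d^\bullet)$: $0\to E^0\xrightarrow{d^0}E^1\xrightarrow{d^1}\cdots\xrightarrow{d^{N-1}}E^N\to 0$ be a bounded complex of holomorphic vector bundles on $B$ whose differentials are $\mathcal{O}_B$-linear holomorphic bundle maps with $d^{q+1}\circ d^q=0$. For $s\in B$, $E_s^\bullet$ denotes the fibre complex (with differentials $d^q_s$) and $H^q(E_s)=\ker d^q_s/\mathrm{im}\, d^{q-1}_s$. Let $\mathcal{E}_0^q$ be the stalk at $0$ of the sheaf of holomorphic sections of $E^q$; for a germ $s$, $s(0)$ is its value at $0$. For $n\ge1$, $\mathcal{E}_0^\bullet\otimes_{\mathcal{O}}\mathcal{O}/\mathfrak{m}_0^n$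 is the induced truncated complex with cohomology $H^q(\mathcal{E}_0^\bullet\otimes_{\mathcal{O}}\mathcal{O}/\mathfrak{m}_0^n)$. Obstruction maps. $o_n^q:H^q(\mathcal{E}_0^\bullet\otimes\mathcal{O}/\mathfrak{m}_0^n)\to H^{q+1}(E_0)$ sends the class of $\tilde\alpha \bmod t^n$ (where $\tilde\alpha\in\mathcal{E}_0^q$ with $d^q\tilde\alpha\in t^n\mathcal{E}_0^{q+1}$) to the class of $(t^{-n}d^q\tilde\alpha)(0)$ (this is well defined). For $i\ge 0$, $\rho_i^q:H^q(E_0)\to H^q(\mathcal{E}_0^\bullet\otimes\mathcal{O}/\mathfrak{m}_0^{i+1})$ is $[\sigma]\mapsto[t^i\tilde\sigma \bmod t^{i+1}]$, where $\tilde\sigma$ is any germ with $\tilde\sigma(0)=\sigma$. For $0\le i\le n$ set $o^q_{n,i}=\rho_i^{q+1}\circ o_n^q: H^q(\mathcal{E}_0^\bullet\otimes\mathcal{O}/\mathfrak{m}_0^n)\to H^{q+1}(\mathcal{E}_0^\bullet\otimes\mathcal{O}/\mathfrak{m}_0^{i+1})$. *)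

theory Defs
  imports "HOL-Analysis.Analysis"
begin

text \<open>The base B is the disc ball 0 R (coordinate t = z).  The bundle E^q is
  (holomorphically trivialised as) B x C^(r q); fibre vectors are functions nat => complex
  vanishing at indices >= r q.  The differential d^q is a matrix D q z of holomorphic
  functions of z, of size r(q+1) x r(q).  Germs at 0 are represented by functions holomorphic
  on some ball around 0, compared up to eventual equality near 0.\<close>

definition vec :: "nat \<Rightarrow> (nat \<Rightarrow> complex) \<Rightarrow> bool" where
  "vec m x \<longleftrightarrow> (\<forall>i\<ge>m. x i = 0)"

definition app :: "nat \<Rightarrow> nat \<Rightarrow> (nat \<Rightarrow> nat \<Rightarrow> complex) \<Rightarrow> (nat \<Rightarrow> complex) \<Rightarrow> nat \<Rightarrow> complex" where
  "app m k M x = (\<lambda>i. if i < k then (\<Sum>j<m. M i j * x j) else 0)"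

text \<open>A bounded complex 0 -> E^0 -> ... -> E^N -> 0 of (trivial) holomorphic bundles on B.\<close>
definition is_hol_complex ::
  "complex set \<Rightarrow> nat \<Rightarrow> (nat \<Rightarrow> nat) \<Rightarrow> (nat \<Rightarrow> complex \<Rightarrow> nat \<Rightarrow> nat \<Rightarrow> complex) \<Rightarrow> bool" where
  "is_hol_complex B N r D \<longleftrightarrow>
     (\<forall>q>N. r q = 0) \<and>
     (\<forall>q i j. (\<lambda>z. D q z i j) holomorphic_on B) \<and>
     (\<forall>q z x. z \<in> B \<longrightarrow>
        app (r (Suc q)) (r (Suc (Suc q))) (D (Suc q) z) (app (r q) (r (Suc q)) (D q z) x) = (\<lambda>_. 0))"

definition germ :: "(nat \<Rightarrow> nat) \<Rightarrow> nat \<Rightarrow> (complex \<Rightarrow> nat \<Rightarrow> complex) \<Rightarrow> bool" where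
  "germ r q s \<longleftrightarrow> (\<exists>e>0. (\<forall>i. (\<lambda>z. s z i) holomorphic_on ball 0 e)) \<and> (\<forall>z. vec (r q) (s z))"

definition evq :: "(complex \<Rightarrow> nat \<Rightarrow> complex) \<Rightarrow> (complex \<Rightarrow> nat \<Rightarrow> complex) \<Rightarrow> bool" where
  "evq f g \<longleftrightarrow> eventually (\<lambda>z. f z = g z) (nhds 0)"

definition tpow :: "nat \<Rightarrow> (complex \<Rightarrow> nat \<Rightarrow> complex) \<Rightarrow> complex \<Rightarrow> nat \<Rightarrow> complex" where
  "tpow n s = (\<lambda>z i. z ^ n * s z i)"

definition dsec :: "(nat \<Rightarrow> nat) \<Rightarrow> (nat \<Rightarrow> complex \<Rightarrow> nat \<Rightarrow> nat \<Rightarrow> complex) \<Rightarrow> nat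
     \<Rightarrow> (complex \<Rightarrow> nat \<Rightarrow> complex) \<Rightarrow> complex \<Rightarrow> nat \<Rightarrow> complex" where
  "dsec r D q s = (\<lambda>z. app (r q) (r (Suc q)) (D q z) (s z))"

text \<open>u lies in t^n E^q_0.\<close>
definition divisible :: "(nat \<Rightarrow> nat) \<Rightarrow> nat \<Rightarrow> nat \<Rightarrow> (complex \<Rightarrow> nat \<Rightarrow> complex) \<Rightarrow> bool" where
  "divisible r q n u \<longleftrightarrow> (\<exists>v. germ r q v \<and> evq u (tpow n v))"

text \<open>Cocycles of E_0 (x) O/m^n in degree q (represented by germs).\<close>
definition tcyc where
  "tcyc r D q n s \<longleftrightarrow> germ r q s \<and> divisible r (Suc q) n (dsec r D q s)"

text \<open>Cohomologous mod (image of d^(q-1)) + t^n E^q_0.\<close>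
definition trel where
  "trel r D q n = {(s, s'). tcyc r D q n s \<and> tcyc r D q n s' \<and>
      (\<exists>g w. germ r (q - 1) g \<and> germ r q w \<and>
         evq (\<lambda>z i. s z i - s' z i)
             (\<lambda>z i. (if q = 0 then 0 else dsec r D (q - 1) g z i) + z ^ n * w z i))}"

text \<open>H^q(E_0 (x) O/m^n).\<close>
definition Htrunc where
  "Htrunc r D q n = {s. tcyc r D q n s} // trel r D q n"

definition tclass where
  "tclass r D q n s = trel r D q n `` {s}"

definition tzero where
  "tzero r D q n = tclass r D q n (\<lambda>z i. 0)"

text \<open>Fibre complex at 0 and its cohomology H^q(E_0).\<close>
definition fcyc where
  "fcyc r D q x \<longleftrightarrow> vec (r q) x \<and> app (r q) (r (Suc q)) (D q 0) x = (\<lambda>_. 0)"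

definition frel where
  "frel r D q = {(x, y). fcyc r D q x \<and> fcyc r D q y \<and>
      (\<exists>y'. vec (r (q - 1)) y' \<and>
         (\<lambda>i. x i - y i) = (if q = 0 then (\<lambda>_. 0) else app (r (q - 1)) (r q) (D (q - 1) 0) y'))}"

definition Hfib where
  "Hfib r D q = {x. fcyc r D q x} // frel r D q"

definition fclass where
  "fclass r D q x = frel r D q `` {x}"

definition fzero where
  "fzero r D q = fclass r D q (\<lambda>_. 0)"

text \<open>Obstruction map o_n^q : H^q(E_0 (x) O/m^n) -> H^(q+1)(E_0),
  [alpha mod t^n] |-> [(t^-n d alpha)(0)].\<close>
definition obs where
  "obs r D q n c = fclass r D (Suc q)
     ((SOME v. germ r (Suc q) v \<and> (\<exists>s\<in>c. evq (dsec r D q s) (tpow n v))) 0)"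

text \<open>rho_i^q : H^q(E_0) -> H^q(E_0 (x) O/m^(i+1)),  [sigma] |-> [t^i sigma mod t^(i+1)]
  (sigma extended as a constant germ).\<close>
definition rho where
  "rho r D q i C = tclass r D q (Suc i) (\<lambda>z j. z ^ i * (SOME x. x \<in> C) j)"

definition obs_i where
  "obs_i r D q n i c = rho r D (Suc q) i (obs r D q n c)"

end

theory Submission
  imports Defs
begin

text \<open>
  Call a level k \<ge> 1 "realising" if o_n(c) = o_k(c') for some class c' at level k.
  Level n is realising; let n' be the least realising level and c' a class realising it, so that
  o_{n',n'-1}(c') = \<rho>_{n'-1}(o_n(c)).  Suppose \<rho>_{n'-1}(o_n(c)) = 0.  For a fibre representative
  \<sigma> of o_n(c) this means t^{n'-1} \<sigma> = d g + t^{n'} w for germs g, w.  If n' = 1, then \<sigma> is a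
  fibre coboundary, i.e. o_n(c) = 0; if n' \<ge> 2, then d g = t^{n'-1}(\<sigma> - t w), so [g] is a class
  at level n' - 1 with obstruction [\<sigma>] = o_n(c), contradicting minimality (descent lemma).
\<close>

lemma app_add: "app m k M (\<lambda>j. x j + y j) = (\<lambda>i. app m k M x i + app m k M y i)"
  by (auto simp: app_def fun_eq_iff distrib_left sum.distrib)

lemma app_scale: "app m k M (\<lambda>j. c * x j) = (\<lambda>i. c * app m k M x i)"
  by (auto simp: app_def fun_eq_iff sum_distrib_left mult.left_commute)

lemma app_zero: "app m k M (\<lambda>j. 0) = (\<lambda>i. 0)"
  by (auto simp: app_def fun_eq_iff)

lemma app_minus: "app m k M (\<lambda>j. - x j) = (\<lambda>i. - app m k M x i)"
  by (auto simp: app_def fun_eq_iff sum_negf)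

lemma vec_zero: "vec m (\<lambda>_. 0)"
  by (simp add: vec_def)

subsection \<open>Analytic facts about germs at 0\<close>

lemma holomorphic_ball_continuous_at_0:
  assumes "f holomorphic_on ball 0 e" "e > 0"
  shows "continuous (at 0) f"
  using assms holomorphic_on_imp_continuous_on continuous_on_interior[of "ball 0 e" f 0]
  by (simp add: interior_open)

text \<open>Division by t^k at the level of values: if t^k f vanishes near 0 and f is continuous at 0,
  then f(0) = 0.  This is how "(t^{-k} u)(0)" is controlled.\<close>
lemma zero_at_0_if_power_multiple_vanishes:
  fixes f :: "complex \<Rightarrow> complex"
  assumes "continuous (at 0) f" "eventually (\<lambda>z. z ^ k * f z = 0) (nhds 0)"
  shows "f 0 = 0"
proof -
  have "eventually (\<lambda>z. f z = 0) (at 0)"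
    using assms(2) unfolding eventually_at_filter by (rule eventually_mono) auto
  then have "(f \<longlongrightarrow> 0) (at 0)" by (simp add: tendsto_eventually)
  moreover have "(f \<longlongrightarrow> f 0) (at 0)" using assms(1) by (simp add: continuous_at)
  ultimately show ?thesis using tendsto_unique[of "at 0" f] by simp
qed

lemma germ_continuous: "germ r p v \<Longrightarrow> continuous (at 0) (\<lambda>z. v z i)"
  unfolding germ_def using holomorphic_ball_continuous_at_0 by blast

lemma germ_zero: "germ r p (\<lambda>z j. 0)"
  unfolding germ_def by (auto simp: vec_def intro!: exI[of _ 1])

lemma germ_const_minus_t_times:
  assumes "vec (r p) \<sigma>" "germ r p w"
  shows "germ r p (\<lambda>z i. \<sigma> i - z * w z i)"
proof -
  from assms(2) obtain e where e: "e > 0" "\<And>i. (\<lambda>z. w z i) holomorphic_on ball 0 e"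
    "\<And>z. vec (r p) (w z)"
    unfolding germ_def by auto
  have "(\<lambda>z. \<sigma> i - z * w z i) holomorphic_on ball 0 e" for i
    using e(2)[of i] by (intro holomorphic_intros)
  moreover have "vec (r p) (\<lambda>i. \<sigma> i - z * w z i)" for z
    using assms(1) e(3)[of z] by (simp add: vec_def)
  ultimately show ?thesis unfolding germ_def using e(1) by blast
qed

lemma frel_refl: "fcyc r D p x \<Longrightarrow> (x, x) \<in> frel r D p"
  unfolding frel_def by (auto intro!: exI[of _ "\<lambda>_. 0"] simp: vec_zero app_zero)

lemma frel_sym:
  assumes "(x, y) \<in> frel r D p"
  shows "(y, x) \<in> frel r D p"
proof -
  from assms obtain y' where h: "fcyc r D p x" "fcyc r D p y" "vec (r (p - 1)) y'"
    "(\<lambda>i. x i - y i) = (if p = 0 then (\<lambda>_. 0) else app (r (p - 1)) (r p) (D (p - 1) 0) y')"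
    unfolding frel_def by auto
  have "(\<lambda>i. y i - x i)
      = (if p = 0 then (\<lambda>_. 0) else app (r (p - 1)) (r p) (D (p - 1) 0) (\<lambda>j. - y' j))"
    using h(4) by (auto simp: app_minus fun_eq_iff split: if_splits) (metis minus_diff_eq)+
  moreover have "vec (r (p - 1)) (\<lambda>j. - y' j)" using h(3) by (simp add: vec_def)
  ultimately show ?thesis unfolding frel_def using h by blast
qed

lemma frel_trans:
  assumes "(x, y) \<in> frel r D p" "(y, u) \<in> frel r D p"
  shows "(x, u) \<in> frel r D p"
proof -
  from assms(1) obtain y' where h: "fcyc r D p x" "vec (r (p - 1)) y'"
    "(\<lambda>i. x i - y i) = (if p = 0 then (\<lambda>_. 0) else app (r (p - 1)) (r p) (D (p - 1) 0) y')"
    unfolding frel_def by auto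
  from assms(2) obtain u' where k: "fcyc r D p u" "vec (r (p - 1)) u'"
    "(\<lambda>i. y i - u i) = (if p = 0 then (\<lambda>_. 0) else app (r (p - 1)) (r p) (D (p - 1) 0) u')"
    unfolding frel_def by auto
  have "(\<lambda>i. x i - u i)
      = (if p = 0 then (\<lambda>_. 0) else app (r (p - 1)) (r p) (D (p - 1) 0) (\<lambda>j. y' j + u' j))"
  proof
    fix i
    have "x i - u i = (x i - y i) + (y i - u i)" by simp
    then show "x i - u i = (if p = 0 then (\<lambda>_. 0)
        else app (r (p - 1)) (r p) (D (p - 1) 0) (\<lambda>j. y' j + u' j)) i"
      using fun_cong[OF h(3), of i] fun_cong[OF k(3), of i] by (auto simp: app_add)
  qed
  moreover have "vec (r (p - 1)) (\<lambda>j. y' j + u' j)" using h(2) k(2) by (simp add: vec_def)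
  ultimately show ?thesis unfolding frel_def using h k by blast
qed

lemma fclass_eq: "(x, y) \<in> frel r D p \<Longrightarrow> fclass r D p x = fclass r D p y"
  unfolding fclass_def using frel_sym frel_trans by blast

lemma fclass_chosen_rep:
  assumes "fcyc r D p x"
  defines "\<sigma> \<equiv> SOME y. y \<in> fclass r D p x"
  shows "fcyc r D p \<sigma>" "fclass r D p \<sigma> = fclass r D p x"
proof -
  have "x \<in> fclass r D p x" unfolding fclass_def using frel_refl[OF assms(1)] by blast
  then have "\<sigma> \<in> fclass r D p x" unfolding \<sigma>_def by (rule someI[of "\<lambda>y. y \<in> fclass r D p x"])
  then have rel: "(x, \<sigma>) \<in> frel r D p" unfolding fclass_def by simp
  then show "fcyc r D p \<sigma>" unfolding frel_def by simp
  show "fclass r D p \<sigma> = fclass r D p x" using fclass_eq[OF frel_sym[OF rel]] .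
qed

lemma tcyc_zero: "tcyc r D q k (\<lambda>z j. 0)"
  unfolding tcyc_def divisible_def
  by (auto intro!: exI[of _ "\<lambda>z j. 0"] simp: germ_zero evq_def dsec_def app_zero tpow_def)

lemma trel_refl: "tcyc r D q k s \<Longrightarrow> (s, s) \<in> trel r D q k"
  unfolding trel_def
  by (auto intro!: exI[of _ "\<lambda>z j. 0"] simp: germ_zero evq_def dsec_def app_def fun_eq_iff)

lemma tclass_in_Htrunc: "tcyc r D q k s \<Longrightarrow> tclass r D q k s \<in> Htrunc r D q k"
  unfolding tclass_def Htrunc_def by (rule quotientI) simp

lemma tclass_eq_tzero:
  assumes "tclass r D q k s = tzero r D q k"
  shows "(s, \<lambda>z j. 0) \<in> trel r D q k"
proof -
  have "(\<lambda>z j. 0) \<in> tzero r D q k"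
    unfolding tzero_def tclass_def using trel_refl[OF tcyc_zero] by blast
  then show ?thesis using assms unfolding tclass_def by (metis Image_singleton_iff)
qed

lemma Htrunc_representative:
  assumes "c \<in> Htrunc r D q k"
  obtains s v where "tcyc r D q k s" "c = tclass r D q k s" "germ r (Suc q) v"
    "evq (dsec r D q s) (tpow k v)"
proof -
  from assms obtain s where "tcyc r D q k s" "c = tclass r D q k s"
    unfolding Htrunc_def tclass_def by (auto elim!: quotientE)
  with that show ?thesis unfolding tcyc_def divisible_def by blast
qed

subsection \<open>The obstruction class\<close>

locale hol_complex =
  fixes R :: real and N :: nat and r :: "nat \<Rightarrow> nat"
    and D :: "nat \<Rightarrow> complex \<Rightarrow> nat \<Rightarrow> nat \<Rightarrow> complex"
  assumes R_pos: "R > 0"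
    and complex: "is_hol_complex (ball 0 R) N r D"
begin

lemma eventually_in_ball: "eventually (\<lambda>z. z \<in> ball (0::complex) R) (nhds 0)"
  using R_pos by (intro eventually_nhds_in_open) auto

lemma dd_zero:
  "z \<in> ball 0 R \<Longrightarrow>
     app (r (Suc q)) (r (Suc (Suc q))) (D (Suc q) z) (app (r q) (r (Suc q)) (D q z) x) = (\<lambda>_. 0)"
  using complex unfolding is_hol_complex_def by blast

lemma D_continuous: "continuous (at 0) (\<lambda>z. D q z i j)"
  using complex R_pos holomorphic_ball_continuous_at_0 unfolding is_hol_complex_def by blast

lemma dsec_continuous:
  assumes "germ r p v"
  shows "continuous (at 0) (\<lambda>z. dsec r D q v z i)"
  using germ_continuous[OF assms] unfolding dsec_def app_def
  by (cases "i < r (Suc q)") (auto intro!: continuous_intros D_continuous)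

text \<open>If d s = t^k v then v(0) is a cocycle of the fibre complex, because
  t^k d v = d d s = 0 near 0.\<close>
lemma obstruction_value_is_cocycle:
  assumes v: "germ r (Suc q) v" and ds: "evq (dsec r D q s) (tpow k v)"
  shows "fcyc r D (Suc q) (v 0)"
proof -
  have "dsec r D (Suc q) v 0 i = 0" for i
  proof (rule zero_at_0_if_power_multiple_vanishes[OF dsec_continuous[OF v]])
    show "eventually (\<lambda>z. z ^ k * dsec r D (Suc q) v z i = 0) (nhds 0)"
      using ds[unfolded evq_def] eventually_in_ball
    proof eventually_elim
      case (elim z)
      have "z ^ k * dsec r D (Suc q) v z i
          = app (r (Suc q)) (r (Suc (Suc q))) (D (Suc q) z) (dsec r D q s z) i"
        using elim(1) by (simp add: dsec_def app_scale tpow_def)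
      then show ?case using dd_zero[OF elim(2)] by (simp add: dsec_def)
    qed
  qed
  then show ?thesis using v unfolding fcyc_def germ_def dsec_def by auto
qed

text \<open>Cohomologous truncated cocycles have differentials differing by t^k d w near 0:
  the coboundary part is killed by d \<circ> d = 0.\<close>
lemma dsec_of_cohomologous:
  assumes "(s, s') \<in> trel r D q k"
  obtains w where "germ r q w"
    "evq (dsec r D q s) (\<lambda>z i. dsec r D q s' z i + z ^ k * dsec r D q w z i)"
proof -
  from assms obtain g w where w: "germ r q w" and
    E: "evq (\<lambda>z i. s z i - s' z i)
             (\<lambda>z i. (if q = 0 then 0 else dsec r D (q - 1) g z i) + z ^ k * w z i)"
    unfolding trel_def by auto
  have "evq (dsec r D q s) (\<lambda>z i. dsec r D q s' z i + z ^ k * dsec r D q w z i)"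
    unfolding evq_def using E[unfolded evq_def] eventually_in_ball
  proof eventually_elim
    case (elim z)
    define T where "T = (if q = 0 then (\<lambda>_. 0) else dsec r D (q - 1) g z)"
    have s: "s z = (\<lambda>j. s' z j + (T j + z ^ k * w z j))"
      using elim(1) unfolding T_def
      by (auto simp: fun_eq_iff dest: fun_cong) (metis diff_eq_eq add.commute)+
    have T: "app (r q) (r (Suc q)) (D q z) T = (\<lambda>_. 0)"
      using dd_zero[OF elim(2), of "q - 1" "g z"]
      by (cases q) (simp_all add: T_def app_zero dsec_def)
    show ?case unfolding dsec_def by (simp only: s app_add app_scale T) simp
  qed
  with w show thesis by (rule that)
qed

text \<open>Well-definedness of the obstruction: cohomologous cocycles give cohomologous values
  (t^{-k} d s)(0).\<close>
lemma obstruction_well_defined: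
  assumes "(s, s') \<in> trel r D q k"
    and v: "germ r (Suc q) v" and v': "germ r (Suc q) v'"
    and ds: "evq (dsec r D q s) (tpow k v)" and ds': "evq (dsec r D q s') (tpow k v')"
  shows "(v 0, v' 0) \<in> frel r D (Suc q)"
proof -
  obtain w where w: "germ r q w"
    and dw: "evq (dsec r D q s) (\<lambda>z i. dsec r D q s' z i + z ^ k * dsec r D q w z i)"
    using dsec_of_cohomologous[OF assms(1)] .
  have "v 0 i - v' 0 i - dsec r D q w 0 i = 0" for i
  proof (rule zero_at_0_if_power_multiple_vanishes)
    show "continuous (at 0) (\<lambda>z. v z i - v' z i - dsec r D q w z i)"
      using germ_continuous[OF v] germ_continuous[OF v'] dsec_continuous[OF w]
      by (intro continuous_intros)
    show "eventually (\<lambda>z. z ^ k * (v z i - v' z i - dsec r D q w z i) = 0) (nhds 0)"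
      using dw[unfolded evq_def] ds[unfolded evq_def] ds'[unfolded evq_def]
    proof eventually_elim
      case (elim z)
      then have "z ^ k * v z i = z ^ k * v' z i + z ^ k * dsec r D q w z i"
        by (auto simp: tpow_def dest: fun_cong[where x = i])
      then show ?case by (simp add: algebra_simps)
    qed
  qed
  moreover have "vec (r q) (w 0)" using w unfolding germ_def by auto
  ultimately show ?thesis
    using obstruction_value_is_cocycle[OF v ds] obstruction_value_is_cocycle[OF v' ds']
    unfolding frel_def dsec_def by (auto simp: fun_eq_iff)
qed

lemma obs_tclass:
  assumes s: "tcyc r D q k s" and v: "germ r (Suc q) v" and ds: "evq (dsec r D q s) (tpow k v)"
  shows "obs r D q k (tclass r D q k s) = fclass r D (Suc q) (v 0)"
proof -
  let ?c = "tclass r D q k s"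
  define u where "u = (SOME u. germ r (Suc q) u \<and> (\<exists>s'\<in>?c. evq (dsec r D q s') (tpow k u)))"
  have "s \<in> ?c" unfolding tclass_def using trel_refl[OF s] by blast
  have "germ r (Suc q) u \<and> (\<exists>s'\<in>?c. evq (dsec r D q s') (tpow k u))"
    unfolding u_def by (rule someI[of _ v]) (use v ds \<open>s \<in> ?c\<close> in blast)
  then obtain s' where u: "germ r (Suc q) u" and s': "(s, s') \<in> trel r D q k"
    and ds': "evq (dsec r D q s') (tpow k u)"
    unfolding tclass_def by blast
  have "obs r D q k ?c = fclass r D (Suc q) (u 0)" unfolding obs_def u_def ..
  also have "\<dots> = fclass r D (Suc q) (v 0)"
    using fclass_eq[OF frel_sym[OF obstruction_well_defined[OF s' v u ds ds']]] .
  finally show ?thesis .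
qed

subsection \<open>Descent of obstructions\<close>

lemma descent_representative:
  assumes \<sigma>: "fcyc r D (Suc q) \<sigma>" and "1 \<le> k"
    and zero: "((\<lambda>z j. z ^ (k - 1) * \<sigma> j), (\<lambda>z j. 0)) \<in> trel r D (Suc q) k"
  shows "(k = 1 \<and> (\<sigma>, \<lambda>_. 0) \<in> frel r D (Suc q))
       \<or> (2 \<le> k \<and> (\<exists>g v. tcyc r D q (k - 1) g \<and> germ r (Suc q) v
                         \<and> evq (dsec r D q g) (tpow (k - 1) v) \<and> v 0 = \<sigma>))"
proof -
  from zero obtain g w where g: "germ r q g" and w: "germ r (Suc q) w" and
    E: "evq (\<lambda>z i. z ^ (k - 1) * \<sigma> i - 0) (\<lambda>z i. dsec r D q g z i + z ^ k * w z i)"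
    unfolding trel_def by auto
  show ?thesis
  proof (cases "k = 1")
    case True
    then have "\<sigma> = (\<lambda>i. dsec r D q g 0 i)"
      using eventually_nhds_x_imp_x[OF E[unfolded evq_def]] by simp
    moreover have "vec (r q) (g 0)" using g unfolding germ_def by auto
    moreover have "fcyc r D (Suc q) (\<lambda>_. 0)" by (simp add: fcyc_def vec_zero app_zero)
    ultimately show ?thesis using True \<sigma> unfolding frel_def dsec_def by auto
  next
    case False
    define v where "v = (\<lambda>z i. \<sigma> i - z * w z i)"
    have v: "germ r (Suc q) v"
      unfolding v_def using germ_const_minus_t_times[OF _ w] \<sigma> unfolding fcyc_def by blast
    have "z ^ k = z ^ (k - 1) * z" for z :: complex
      using \<open>1 \<le> k\<close> by (metis Suc_diff_1 less_le_trans power_Suc2 zero_less_one)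
    then have dg: "evq (dsec r D q g) (tpow (k - 1) v)"
      using E unfolding evq_def tpow_def v_def
      by (elim eventually_mono) (auto simp: fun_eq_iff algebra_simps dest!: fun_cong)
    have "tcyc r D q (k - 1) g" unfolding tcyc_def divisible_def using g v dg by blast
    moreover have "v 0 = \<sigma>" unfolding v_def by simp
    ultimately show ?thesis using False \<open>1 \<le> k\<close> v dg by auto
  qed
qed

lemma obstruction_descends:
  assumes "1 \<le> k" and c: "c \<in> Htrunc r D q k"
    and nonzero: "obs r D q k c \<noteq> fzero r D (Suc q)"
    and vanishes: "rho r D (Suc q) (k - 1) (obs r D q k c) = tzero r D (Suc q) k"
  shows "2 \<le> k \<and> (\<exists>c'\<in>Htrunc r D q (k - 1). obs r D q (k - 1) c' = obs r D q k c)"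
proof -
  obtain s v where s: "tcyc r D q k s" "c = tclass r D q k s" and v: "germ r (Suc q) v"
    and ds: "evq (dsec r D q s) (tpow k v)"
    using Htrunc_representative[OF c] .
  have obs_c: "obs r D q k c = fclass r D (Suc q) (v 0)"
    using obs_tclass[OF s(1) v ds] s(2) by simp
  define \<sigma> where "\<sigma> = (SOME y. y \<in> obs r D q k c)"
  have \<sigma>: "fcyc r D (Suc q) \<sigma>" "fclass r D (Suc q) \<sigma> = obs r D q k c"
    using fclass_chosen_rep[OF obstruction_value_is_cocycle[OF v ds]] unfolding \<sigma>_def obs_c
    by simp_all
  have "tclass r D (Suc q) k (\<lambda>z j. z ^ (k - 1) * \<sigma> j) = tzero r D (Suc q) k"
    using vanishes \<open>1 \<le> k\<close> unfolding rho_def \<sigma>_def by simp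
  from descent_representative[OF \<sigma>(1) \<open>1 \<le> k\<close> tclass_eq_tzero[OF this]]
  show ?thesis
  proof (elim disjE conjE exE)
    assume "(\<sigma>, \<lambda>_. 0) \<in> frel r D (Suc q)"
    then show ?thesis using nonzero \<sigma>(2) fclass_eq unfolding fzero_def by metis
  next
    fix g u assume "2 \<le> k" "tcyc r D q (k - 1) g" "germ r (Suc q) u"
      "evq (dsec r D q g) (tpow (k - 1) u)" "u 0 = \<sigma>"
    then show ?thesis using obs_tclass tclass_in_Htrunc \<sigma>(2) by metis
  qed
qed

end

theorem proposition2p6:
  fixes R :: real and N q n :: nat and r :: "nat \<Rightarrow> nat"
    and D :: "nat \<Rightarrow> complex \<Rightarrow> nat \<Rightarrow> nat \<Rightarrow> complex"
    and c :: "(complex \<Rightarrow> nat \<Rightarrow> complex) set"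
  assumes "R > 0"
    and "is_hol_complex (ball 0 R) N r D"
    and "q < N" and "1 \<le> n"
    and "c \<in> Htrunc r D q n"
    and "obs r D q n c \<noteq> fzero r D (Suc q)"
  shows "\<exists>n' c'. 1 \<le> n' \<and> n' \<le> n \<and> c' \<in> Htrunc r D q n' \<and>
           obs_i r D q n' (n' - 1) c' = rho r D (Suc q) (n' - 1) (obs r D q n c) \<and>
           rho r D (Suc q) (n' - 1) (obs r D q n c) \<noteq> tzero r D (Suc q) n'"
proof -
  interpret hol_complex R N r D using assms(1,2) by unfold_locales
  define realised where "realised k \<longleftrightarrow>
    1 \<le> k \<and> (\<exists>c'\<in>Htrunc r D q k. obs r D q k c' = obs r D q n c)" for k
  have "realised n" unfolding realised_def using assms(4,5) by blast
  define n' where "n' = (LEAST k. realised k)"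
  have "realised n'" "n' \<le> n" unfolding n'_def using \<open>realised n\<close> by (rule LeastI, rule Least_le)
  then obtain c' where n': "1 \<le> n'" and c': "c' \<in> Htrunc r D q n'"
    and obs_c': "obs r D q n' c' = obs r D q n c"
    unfolding realised_def by blast
  have "rho r D (Suc q) (n' - 1) (obs r D q n c) \<noteq> tzero r D (Suc q) n'"
  proof
    assume "rho r D (Suc q) (n' - 1) (obs r D q n c) = tzero r D (Suc q) n'"
    then have "realised (n' - 1)"
      using obstruction_descends[OF n' c'] obs_c' assms(6) unfolding realised_def by auto
    moreover have "n' - 1 < n'" using n' by simp
    ultimately show False using not_less_Least unfolding n'_def by blast
  qed
  then show ?thesis using n' \<open>n' \<le> n\<close> c' obs_c' unfolding obs_i_def by metis
qed

end
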